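(* For every $d\ge2$, every $A\in\mathcal C^{d-1}$ and every $p\in[1,\infty)$, $$\max_{C\in\mathcal C^d_A}\big\|r_C-\tfrac12\big\|_{A,p}=\tfrac12(p+1)^{-1/p},$$ i.e. $\|r_C-\frac12\|_{A,p}\le \frac12(p+1)^{-1/p}$ for all $C\in\mathcal C^d_A$, with equality for some $C\in\mathcal C^d_A$ (e.g. any completely dependent copula $C_h\in\mathcal C^d_A$, whose Markov kernel is $\mathbf 1_F(h(\mathbf x))$ for a measurable $h$ with $\mu_A\circ h^{-1}=\lambda$).
   Context: $\mathbb I=[0,1]$, $\lambda$ Lebesgue measure. A $d$-copula $C\in\mathcal C^d$ is the distribution function on $\mathbb I^d$ of a probability measure $\mu_C$ with uniform univariate marginals; points are $(\mathbf x,y)$, $\mathbf x\in\mathbb I^{d-1}$. $C_{1:(d-1)}$ is the marginal copula of the first $d-1$ coordinates. For $A\in\mathcal C^{d-1}$, $\mathcal C^d_A=\{C\in\mathcal C^d: C_{1:(d-1)}=A\}$; for $d=2$, $\mu_A=\lambda$ and $\mathcal C^2_A=\mathcal C^2$. $K_C$ is the Markov kernel of $C$ w.r.t. the first $d-1$ coordinates: $\mu_C(B\times F)=\int_B K_C(\mathbf x,F)\,\mathrm d\mu_{C_{1:(d-1)}}(\mathbf x)$. Regression function $r_C(\mathbf x)=\int y\,K_C(\mathbf x,\mathrm dy)$. $\|f\|_{A,p}=(\int_{\mathbb I^{d-1}}|f|^p\,\mathrm d\mu_A)^{1/p}$. *)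

theory Defs
  imports "HOL-Probability.Probability"
begin

text \<open>Points of the unit cube in dimension m are represented as functions
  nat \<Rightarrow> real on the index set {..<m} (product measure space).  A m-copula is
  represented by its probability measure (the distribution function and the
  measure determine each other): a probability measure on the m-fold product
  of the real line whose univariate marginals are uniform on [0,1] (this forces
  the support to lie in the unit cube).\<close>

definition cube_ms :: "nat \<Rightarrow> (nat \<Rightarrow> real) measure" where
  "cube_ms m = PiM {..<m} (\<lambda>_. lborel)"

definition is_copula :: "nat \<Rightarrow> (nat \<Rightarrow> real) measure \<Rightarrow> bool" where
  "is_copula m \<mu> \<longleftrightarrow> prob_space \<mu> \<and> sets \<mu> = sets (cube_ms m) \<and>
     (\<forall>i<m. distr \<mu> lborel (\<lambda>z. z i) = uniform_measure lborel {0..1})"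

definition marginal_copula :: "nat \<Rightarrow> (nat \<Rightarrow> real) measure \<Rightarrow> (nat \<Rightarrow> real) measure" where
  "marginal_copula d \<mu> = distr \<mu> (cube_ms (d - 1)) (\<lambda>z. restrict z {..<d - 1})"

text \<open>K is a Markov kernel of the d-copula \<mu> w.r.t. the first d-1 coordinates;
  the point z is split as (x,y) with x = z restricted to {..<d-1}, y = z (d-1).\<close>
definition markov_kernel ::
  "nat \<Rightarrow> (nat \<Rightarrow> real) measure \<Rightarrow> ((nat \<Rightarrow> real) \<Rightarrow> real measure) \<Rightarrow> bool" where
  "markov_kernel d \<mu> K \<longleftrightarrow>
     K \<in> measurable (cube_ms (d - 1)) (prob_algebra lborel) \<and>
     (\<forall>B\<in>sets (cube_ms (d - 1)). \<forall>F\<in>sets lborel.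
        emeasure \<mu> {z\<in>space \<mu>. restrict z {..<d - 1} \<in> B \<and> z (d - 1) \<in> F}
          = (\<integral>\<^sup>+x\<in>B. emeasure (K x) F \<partial>(marginal_copula d \<mu>)))"

definition regression :: "((nat \<Rightarrow> real) \<Rightarrow> real measure) \<Rightarrow> (nat \<Rightarrow> real) \<Rightarrow> real" where
  "regression K x = (\<integral>y. y \<partial>(K x))"

definition normAp :: "(nat \<Rightarrow> real) measure \<Rightarrow> real \<Rightarrow> ((nat \<Rightarrow> real) \<Rightarrow> real) \<Rightarrow> real" where
  "normAp A p f = (\<integral>x. \<bar>f x\<bar> powr p \<partial>A) powr (1 / p)"

end

theory Submission
  imports Defs
begin

text \<open>Since almost every kernel measure of a copula lives on \<open>[0,1]\<close>, Jensen's
  inequality for the convex function \<open>y \<mapsto> \<bar>y - 1/2\<bar>\<^sup>p\<close> bounds \<open>\<bar>r\<^sub>C(x) - 1/2\<bar>\<^sup>p\<close> by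
  \<open>\<integral> \<bar>y - 1/2\<bar>\<^sup>p K\<^sub>C(x, dy)\<close>. Integrating over \<open>\<mu>\<^sub>A\<close> mixes the kernel into the law of the
  last coordinate, which is uniform, so the p-th power of the norm is at most
  \<open>\<integral>\<^sub>0\<^sup>1 \<bar>y - 1/2\<bar>\<^sup>p dy = 2\<^sup>-\<^sup>p / (p + 1)\<close>. For a completely dependent copula the kernel is a
  Dirac measure, Jensen's inequality is an equality, and the bound is attained; the copula
  that repeats the first coordinate is one such.\<close>

lemma convex_on_mono_comp:
  fixes f :: "'a::real_vector \<Rightarrow> real"
  assumes f: "convex_on S f" and g: "convex_on T g" "mono_on T g" and fST: "f ` S \<subseteq> T"
  shows "convex_on S (\<lambda>x. g (f x))"
proof (rule convex_onI)
  show "convex S"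
    using f by (rule convex_on_imp_convex)
  fix t :: real and x y assume t: "0 < t" "t < 1" and xy: "x \<in> S" "y \<in> S"
  have "(1 - t) *\<^sub>R x + t *\<^sub>R y \<in> S"
    using convexD_alt[OF \<open>convex S\<close> xy, of t] t by (simp add: algebra_simps)
  moreover have "(1 - t) * f x + t * f y \<in> T"
    using convexD_alt[OF convex_on_imp_convex[OF g(1)], of "f x" "f y" t] fST xy t
    by (auto simp: algebra_simps)
  ultimately have "g (f ((1 - t) *\<^sub>R x + t *\<^sub>R y)) \<le> g ((1 - t) * f x + t * f y)"
    using convex_onD[OF f, of t x y] t xy fST by (intro mono_onD[OF g(2)]) auto
  also have "\<dots> \<le> (1 - t) * g (f x) + t * g (f y)"
    using convex_onD[OF g(1), of t "f x" "f y"] t xy fST by auto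
  finally show "g (f ((1 - t) *\<^sub>R x + t *\<^sub>R y)) \<le> (1 - t) * g (f x) + t * g (f y)" .
qed

lemma convex_on_powr_nonneg:
  fixes p :: real
  assumes p: "1 \<le> p"
  shows "convex_on {0..} (\<lambda>x. x powr p)"
proof (rule convex_on_linorderI)
  fix t x y :: real assume t: "0 < t" "t < 1" and xy: "x \<in> {0..}" "y \<in> {0..}" "x < y"
  show "((1 - t) *\<^sub>R x + t *\<^sub>R y) powr p \<le> (1 - t) * x powr p + t * y powr p"
  proof (cases "x = 0")
    case True
    have "(t * y) powr p = t powr p * y powr p"
      using t xy by (simp add: powr_mult)
    also have "\<dots> \<le> t * y powr p"
      using powr_mono'[OF p, of t] t by (intro mult_right_mono) auto
    finally show ?thesis
      using True p by simp
  next
    case False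
    then show ?thesis
      using convex_onD[OF powr_convex[OF p], of t x y] t xy by simp
  qed
qed simp

lemma convex_on_abs_diff_powr:
  fixes c p :: real
  assumes "1 \<le> p"
  shows "convex_on UNIV (\<lambda>y. \<bar>y - c\<bar> powr p)"
proof (rule convex_on_mono_comp[where f="\<lambda>y. \<bar>y - c\<bar>" and T="{0..}"])
  show "convex_on UNIV (\<lambda>y. \<bar>y - c\<bar>)"
    using convex_on_dist[of UNIV c] by (simp add: dist_real_def abs_minus_commute)
  show "convex_on {0..} (\<lambda>x. x powr p)"
    using assms by (rule convex_on_powr_nonneg)
  show "mono_on {0..} (\<lambda>x::real. x powr p)"
    using assms by (intro mono_onI powr_mono2) auto
qed auto

lemma abs_diff_powr_has_integral_right:
  fixes p c b :: real
  assumes p: "0 < p" and cb: "c \<le> b"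
  shows "((\<lambda>y. \<bar>y - c\<bar> powr p) has_integral (b - c) powr (p + 1) / (p + 1)) {c..b}"
proof -
  define F where "F y = (y - c) powr (p + 1) / (p + 1)" for y
  have "((\<lambda>y. \<bar>y - c\<bar> powr p) has_integral F b - F c) {c..b}"
  proof (rule fundamental_theorem_of_calculus_interior[OF cb])
    show "continuous_on {c..b} F"
      unfolding F_def using p by (intro continuous_intros continuous_on_powr') auto
    fix x assume "x \<in> {c<..<b}"
    then have "(F has_real_derivative \<bar>x - c\<bar> powr p) (at x)"
      unfolding F_def using p by (auto intro!: derivative_eq_intros)
    then show "(F has_vector_derivative \<bar>x - c\<bar> powr p) (at x)"
      by (simp add: has_real_derivative_iff_has_vector_derivative)
  qed
  then show ?thesis
    using p by (simp add: F_def)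
qed

lemma abs_diff_powr_has_integral_left:
  fixes p a c :: real
  assumes p: "0 < p" and ac: "a \<le> c"
  shows "((\<lambda>y. \<bar>y - c\<bar> powr p) has_integral (c - a) powr (p + 1) / (p + 1)) {a..c}"
proof -
  define F where "F y = - ((c - y) powr (p + 1) / (p + 1))" for y
  have "((\<lambda>y. \<bar>y - c\<bar> powr p) has_integral F c - F a) {a..c}"
  proof (rule fundamental_theorem_of_calculus_interior[OF ac])
    show "continuous_on {a..c} F"
      unfolding F_def using p by (intro continuous_intros continuous_on_powr') auto
    fix x assume "x \<in> {a<..<c}"
    then have "(F has_real_derivative \<bar>x - c\<bar> powr p) (at x)"
      unfolding F_def using p by (auto intro!: derivative_eq_intros)
    then show "(F has_vector_derivative \<bar>x - c\<bar> powr p) (at x)"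
      by (simp add: has_real_derivative_iff_has_vector_derivative)
  qed
  then show ?thesis
    using p by (simp add: F_def)
qed

lemma abs_diff_powr_has_integral:
  fixes p a b c :: real
  assumes "0 < p" "a \<le> c" "c \<le> b"
  shows "((\<lambda>y. \<bar>y - c\<bar> powr p) has_integral
           ((c - a) powr (p + 1) + (b - c) powr (p + 1)) / (p + 1)) {a..b}"
  using has_integral_combine[OF assms(2,3) abs_diff_powr_has_integral_left abs_diff_powr_has_integral_right]
    assms by (simp add: add_divide_distrib)

lemma nn_integral_uniform_abs_diff_half_powr:
  fixes p :: real
  assumes "0 < p"
  shows "(\<integral>\<^sup>+y. ennreal (\<bar>y - 1/2\<bar> powr p) \<partial>uniform_measure lborel {0..1})
           = ennreal ((1/2) powr p / (p + 1))"
proof -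
  have "(1/2::real) powr (p + 1) + (1/2) powr (p + 1) = (1/2) powr p"
    by (simp add: powr_add)
  then have "((\<lambda>y. \<bar>y - 1/2\<bar> powr p) has_integral (1/2) powr p / (p + 1)) {0..1::real}"
    using abs_diff_powr_has_integral[OF assms, of 0 "1/2" 1] by simp
  then have "(\<integral>\<^sup>+y. ennreal (\<bar>y - 1/2\<bar> powr p) * indicator {0..1} y \<partial>lborel)
               = ennreal ((1/2) powr p / (p + 1))"
    by (rule nn_integral_has_integral_lebesgue'[rotated]) simp
  then show ?thesis
    by (subst nn_integral_uniform_measure) (auto simp: divide_ennreal_def)
qed

lemma integral_uniform_abs_diff_half_powr:
  fixes p :: real
  assumes "0 < p"
  shows "(\<integral>y. \<bar>y - 1/2\<bar> powr p \<partial>uniform_measure lborel {0..1}) = (1/2) powr p / (p + 1)"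
  using nn_integral_uniform_abs_diff_half_powr[OF assms] assms
  by (subst integral_eq_nn_integral) auto

lemma half_powr_div_powr_inverse:
  fixes p :: real
  assumes "0 < p"
  shows "((1/2) powr p / (p + 1)) powr (1 / p) = 1/2 * (p + 1) powr (- 1 / p)"
proof -
  have "((1/2::real) powr p / (p + 1)) powr (1 / p) = ((1/2) powr p) powr (1 / p) / (p + 1) powr (1 / p)"
    by (rule powr_divide)
  also have "((1/2::real) powr p) powr (1 / p) = 1/2"
    using assms by (simp add: powr_powr)
  also have "1/2 / (p + 1) powr (1 / p) = 1/2 * (p + 1) powr (- 1 / p)"
    by (simp add: powr_minus_divide[symmetric])
  finally show ?thesis .
qed

lemma (in prob_space) jensens_inequality_abs_diff_powr:
  fixes X :: "'a \<Rightarrow> real" and c p :: real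
  assumes X: "X \<in> borel_measurable M" "AE x in M. \<bar>X x\<bar> \<le> B" and p: "1 \<le> p"
  shows "ennreal (\<bar>expectation X - c\<bar> powr p) \<le> (\<integral>\<^sup>+x. ennreal (\<bar>X x - c\<bar> powr p) \<partial>M)"
proof -
  have int_X: "integrable M X"
    using X by (intro integrable_const_bound[where B=B]) auto
  have "AE x in M. norm (\<bar>X x - c\<bar> powr p) \<le> (B + \<bar>c\<bar>) powr p"
    using X(2) by eventually_elim (use p in \<open>auto intro!: powr_mono2\<close>)
  then have int: "integrable M (\<lambda>x. \<bar>X x - c\<bar> powr p)"
    using X(1) by (intro integrable_const_bound) auto
  have "\<bar>expectation X - c\<bar> powr p \<le> expectation (\<lambda>x. \<bar>X x - c\<bar> powr p)"
    by (rule jensens_inequality[OF int_X _ _ int convex_on_abs_diff_powr[OF p]]) auto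
  then have "ennreal (\<bar>expectation X - c\<bar> powr p) \<le> ennreal (expectation (\<lambda>x. \<bar>X x - c\<bar> powr p))"
    by (rule ennreal_leI)
  also have "\<dots> = (\<integral>\<^sup>+x. ennreal (\<bar>X x - c\<bar> powr p) \<partial>M)"
    by (rule nn_integral_eq_integral[OF int, symmetric]) auto
  finally show ?thesis .
qed

lemma space_cube_ms: "space (cube_ms m) = PiE {..<m} (\<lambda>_. UNIV)"
  by (simp add: cube_ms_def space_PiM)

lemma measurable_cube_ms_component: "i < m \<Longrightarrow> (\<lambda>x. x i) \<in> cube_ms m \<rightarrow>\<^sub>M lborel"
  unfolding cube_ms_def by (rule measurable_component_singleton) auto

lemma measurable_cube_ms_restrict: "n \<le> m \<Longrightarrow> (\<lambda>x. restrict x {..<n}) \<in> cube_ms m \<rightarrow>\<^sub>M cube_ms n"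
  unfolding cube_ms_def by (rule measurable_restrict_subset) auto

lemma bind_marginal_copula_markov_kernel:
  assumes C: "sets C = sets (cube_ms (Suc n))" and K: "markov_kernel (Suc n) C K"
  shows "marginal_copula (Suc n) C \<bind> K = distr C lborel (\<lambda>z. z n)"
proof (rule measure_eqI)
  let ?A = "marginal_copula (Suc n) C"
  have space_A: "space ?A = space (cube_ms n)"
    by (simp add: marginal_copula_def)
  then have nonempty: "space ?A \<noteq> {}"
    by (simp add: space_cube_ms PiE_eq_empty_iff)
  have KA: "K \<in> ?A \<rightarrow>\<^sub>M prob_algebra lborel"
    using K by (simp add: markov_kernel_def marginal_copula_def)
  have sets_K: "sets (K x) = sets lborel" if "x \<in> space ?A" for x
    using measurable_space[OF KA that] by (simp add: space_prob_algebra)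
  show sets_eq: "sets (?A \<bind> K) = sets (distr C lborel (\<lambda>z. z n))"
    using sets_bind[OF sets_K nonempty] by simp
  fix F assume "F \<in> sets (?A \<bind> K)"
  then have F: "F \<in> sets lborel"
    using sets_eq by simp
  have last: "(\<lambda>z. z n) \<in> C \<rightarrow>\<^sub>M lborel"
    by (subst measurable_cong_sets[OF C refl]) (rule measurable_cube_ms_component, simp)
  have "emeasure (?A \<bind> K) F = (\<integral>\<^sup>+x. emeasure (K x) F \<partial>?A)"
    by (rule emeasure_bind[OF nonempty measurable_prob_algebraD[OF KA] F])
  also have "\<dots> = (\<integral>\<^sup>+x\<in>space (cube_ms n). emeasure (K x) F \<partial>?A)"
    by (rule nn_integral_cong) (simp add: space_A)
  also have "\<dots> = emeasure C {z\<in>space C. restrict z {..<n} \<in> space (cube_ms n) \<and> z n \<in> F}"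
    using K F by (simp add: markov_kernel_def)
  also have "{z\<in>space C. restrict z {..<n} \<in> space (cube_ms n) \<and> z n \<in> F} = (\<lambda>z. z n) -` F \<inter> space C"
    by (auto simp: space_cube_ms)
  also have "emeasure C \<dots> = emeasure (distr C lborel (\<lambda>z. z n)) F"
    by (rule emeasure_distr[OF last F, symmetric])
  finally show "emeasure (?A \<bind> K) F = emeasure (distr C lborel (\<lambda>z. z n)) F" .
qed

lemma normAp_regression_le:
  fixes p :: real
  assumes C: "is_copula (Suc n) C" and K: "markov_kernel (Suc n) C K" and p: "1 \<le> p"
  shows "normAp (marginal_copula (Suc n) C) p (\<lambda>x. regression K x - 1/2)
           \<le> ((1/2) powr p / (p + 1)) powr (1 / p)"
proof -
  let ?A = "marginal_copula (Suc n) C"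
  define g where "g y = \<bar>y - 1/2\<bar> powr p" for y :: real
  have KA: "K \<in> ?A \<rightarrow>\<^sub>M prob_algebra lborel"
    using K by (simp add: markov_kernel_def marginal_copula_def)
  have mix: "?A \<bind> K = uniform_measure lborel {0..1}"
    using bind_marginal_copula_markov_kernel[OF _ K] C by (simp add: is_copula_def)
  have "AE y in ?A \<bind> K. y \<in> {0..1}"
    unfolding mix by (rule AE_uniform_measureI) auto
  moreover have "Measurable.pred lborel (\<lambda>y::real. y \<in> {0..1})"
    by measurable
  ultimately have "AE x in ?A. AE y in K x. y \<in> {0..1}"
    using AE_bind[OF measurable_prob_algebraD[OF KA]] by blast
  then have "AE x in ?A. ennreal (g (regression K x)) \<le> (\<integral>\<^sup>+y. ennreal (g y) \<partial>K x)"
    using AE_space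
  proof eventually_elim
    case (elim x)
    then have "prob_space (K x)" and sets_Kx: "sets (K x) = sets borel"
      using measurable_space[OF KA elim(2)] by (auto simp: space_prob_algebra)
    then interpret Kx: prob_space "K x" by simp
    show ?case
      unfolding g_def regression_def
    proof (rule Kx.jensens_inequality_abs_diff_powr[where B=1, OF _ _ p])
      show "(\<lambda>y. y) \<in> borel_measurable (K x)"
        by (subst measurable_cong_sets[OF sets_Kx refl]) simp
      show "AE y in K x. \<bar>y\<bar> \<le> 1"
        using elim(1) by eventually_elim auto
    qed
  qed
  then have "(\<integral>\<^sup>+x. ennreal (g (regression K x)) \<partial>?A) \<le> (\<integral>\<^sup>+x. \<integral>\<^sup>+y. ennreal (g y) \<partial>K x \<partial>?A)"
    by (rule nn_integral_mono_AE)
  also have "\<dots> = (\<integral>\<^sup>+y. ennreal (g y) \<partial>(?A \<bind> K))"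
    by (rule nn_integral_bind[symmetric, OF _ measurable_prob_algebraD[OF KA]]) (simp add: g_def)
  also have "\<dots> = ennreal ((1/2) powr p / (p + 1))"
    using p by (simp add: mix g_def nn_integral_uniform_abs_diff_half_powr)
  finally have le: "(\<integral>x. g (regression K x) \<partial>?A) \<le> (1/2) powr p / (p + 1)"
    by (intro integral_real_bounded) (use p in auto)
  have "normAp ?A p (\<lambda>x. regression K x - 1/2) = (\<integral>x. g (regression K x) \<partial>?A) powr (1 / p)"
    by (simp add: normAp_def g_def)
  also have "\<dots> \<le> ((1/2) powr p / (p + 1)) powr (1 / p)"
    using p le by (intro powr_mono2 integral_nonneg_AE) (auto simp: g_def)
  finally show ?thesis .
qed

text \<open>The paper's completely dependent copula \<open>C\<^sub>h\<close>; the value \<open>h x\<close> goes to the index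
  \<open>n\<close>, where the points \<open>x \<in> space (cube_ms n)\<close> are \<open>undefined\<close>.\<close>

definition completely_dependent_copula ::
  "nat \<Rightarrow> (nat \<Rightarrow> real) measure \<Rightarrow> ((nat \<Rightarrow> real) \<Rightarrow> real) \<Rightarrow> (nat \<Rightarrow> real) measure" where
  "completely_dependent_copula n A h = distr A (cube_ms (Suc n)) (\<lambda>x. x(n := h x))"

lemma measurable_fun_upd_cube_ms:
  assumes h: "h \<in> cube_ms n \<rightarrow>\<^sub>M lborel"
  shows "(\<lambda>x. x(n := h x)) \<in> cube_ms n \<rightarrow>\<^sub>M cube_ms (Suc n)"
  unfolding cube_ms_def
proof (rule measurable_PiM_single')
  fix i assume "i \<in> {..<Suc n}"
  then show "(\<lambda>x. (x(n := h x)) i) \<in> PiM {..<n} (\<lambda>_. lborel) \<rightarrow>\<^sub>M lborel"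
    using h by (cases "i = n") (auto simp: cube_ms_def)
qed (auto simp: space_PiM PiE_iff extensional_def)

lemma marginal_completely_dependent_copula:
  assumes A: "sets A = sets (cube_ms n)" and h: "h \<in> cube_ms n \<rightarrow>\<^sub>M lborel"
  shows "marginal_copula (Suc n) (completely_dependent_copula n A h) = A"
proof -
  have ext: "(\<lambda>x. x(n := h x)) \<in> A \<rightarrow>\<^sub>M cube_ms (Suc n)"
    by (subst measurable_cong_sets[OF A refl]) (rule measurable_fun_upd_cube_ms[OF h])
  have "marginal_copula (Suc n) (completely_dependent_copula n A h)
          = distr A (cube_ms n) ((\<lambda>z. restrict z {..<n}) \<circ> (\<lambda>x. x(n := h x)))"
    unfolding marginal_copula_def completely_dependent_copula_def
    by (simp add: distr_distr[OF measurable_cube_ms_restrict ext])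
  also have "\<dots> = distr A (cube_ms n) (\<lambda>x. x)"
    by (rule distr_cong) (auto simp: sets_eq_imp_space_eq[OF A] space_cube_ms)
  also have "\<dots> = A"
    by (rule distr_id2) (simp add: A)
  finally show ?thesis .
qed

lemma is_copula_completely_dependent_copula:
  assumes A: "is_copula n A" and h: "h \<in> cube_ms n \<rightarrow>\<^sub>M lborel"
    and uniform_h: "distr A lborel h = uniform_measure lborel {0..1}"
  shows "is_copula (Suc n) (completely_dependent_copula n A h)"
  unfolding is_copula_def
proof (intro conjI allI impI)
  have sets_A: "sets A = sets (cube_ms n)"
    using A by (simp add: is_copula_def)
  have ext: "(\<lambda>x. x(n := h x)) \<in> A \<rightarrow>\<^sub>M cube_ms (Suc n)"
    by (subst measurable_cong_sets[OF sets_A refl]) (rule measurable_fun_upd_cube_ms[OF h])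
  show "prob_space (completely_dependent_copula n A h)"
    unfolding completely_dependent_copula_def
    using A ext by (intro prob_space.prob_space_distr) (auto simp: is_copula_def)
  show "sets (completely_dependent_copula n A h) = sets (cube_ms (Suc n))"
    by (simp add: completely_dependent_copula_def)
  fix i assume i: "i < Suc n"
  have "distr (completely_dependent_copula n A h) lborel (\<lambda>z. z i)
          = distr A lborel (\<lambda>x. (x(n := h x)) i)"
    unfolding completely_dependent_copula_def
    by (simp add: distr_distr[OF measurable_cube_ms_component[OF i] ext] comp_def)
  also have "\<dots> = uniform_measure lborel {0..1}"
    using uniform_h A i by (cases "i = n") (auto simp: is_copula_def)
  finally show "distr (completely_dependent_copula n A h) lborel (\<lambda>z. z i)
                  = uniform_measure lborel {0..1}" .
qed

lemma markov_kernel_completely_dependent_copula: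
  assumes A: "sets A = sets (cube_ms n)" and h: "h \<in> cube_ms n \<rightarrow>\<^sub>M lborel"
  shows "markov_kernel (Suc n) (completely_dependent_copula n A h) (\<lambda>x. return lborel (h x))"
  unfolding markov_kernel_def
proof (intro conjI ballI)
  show "(\<lambda>x. return lborel (h x)) \<in> cube_ms (Suc n - 1) \<rightarrow>\<^sub>M prob_algebra lborel"
    using h by (auto intro!: measurable_prob_algebraI prob_space_return
                       measurable_compose[OF h return_measurable])
  let ?C = "completely_dependent_copula n A h"
  fix B :: "(nat \<Rightarrow> real) set" and F :: "real set"
  assume B: "B \<in> sets (cube_ms (Suc n - 1))" and F: "F \<in> sets lborel"
  have ext: "(\<lambda>x. x(n := h x)) \<in> A \<rightarrow>\<^sub>M cube_ms (Suc n)"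
    by (subst measurable_cong_sets[OF A refl]) (rule measurable_fun_upd_cube_ms[OF h])
  define S where "S = {z \<in> space (cube_ms (Suc n)). restrict z {..<n} \<in> B \<and> z n \<in> F}"
  have "S = ((\<lambda>z. restrict z {..<n}) -` B \<inter> space (cube_ms (Suc n)))
              \<inter> ((\<lambda>z. z n) -` F \<inter> space (cube_ms (Suc n)))"
    by (auto simp: S_def)
  also have "\<dots> \<in> sets (cube_ms (Suc n))"
    using B F by (intro sets.Int measurable_sets[OF measurable_cube_ms_restrict]
                        measurable_sets[OF measurable_cube_ms_component]) auto
  finally have S: "S \<in> sets (cube_ms (Suc n))" .
  have preimage: "(\<lambda>x. x(n := h x)) -` S \<inter> space A = B \<inter> (h -` F \<inter> space A)"
    using measurable_space[OF ext] sets.sets_into_space[OF B] sets_eq_imp_space_eq[OF A]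
    by (auto simp: S_def space_cube_ms)
  have h_A: "h \<in> A \<rightarrow>\<^sub>M lborel"
    by (subst measurable_cong_sets[OF A refl]) (rule h)
  have "emeasure ?C S = emeasure A (B \<inter> (h -` F \<inter> space A))"
    unfolding completely_dependent_copula_def by (simp add: emeasure_distr[OF ext S] preimage)
  also have "\<dots> = (\<integral>\<^sup>+x. indicator (B \<inter> (h -` F \<inter> space A)) x \<partial>A)"
    using B A measurable_sets[OF h_A F] by (intro nn_integral_indicator[symmetric]) auto
  also have "\<dots> = (\<integral>\<^sup>+x\<in>B. emeasure (return lborel (h x)) F \<partial>A)"
    using F by (intro nn_integral_cong) (auto simp: indicator_def)
  finally show "emeasure ?C {z \<in> space ?C. restrict z {..<Suc n - 1} \<in> B \<and> z (Suc n - 1) \<in> F}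
      = (\<integral>\<^sup>+x\<in>B. emeasure (return lborel (h x)) F \<partial>marginal_copula (Suc n) ?C)"
    using marginal_completely_dependent_copula[OF A h]
    by (simp add: S_def completely_dependent_copula_def)
qed

lemma normAp_regression_return:
  fixes p :: real
  assumes h: "h \<in> A \<rightarrow>\<^sub>M lborel" and uniform_h: "distr A lborel h = uniform_measure lborel {0..1}"
    and p: "0 < p"
  shows "normAp A p (\<lambda>x. regression (\<lambda>x. return lborel (h x)) x - 1/2)
           = ((1/2) powr p / (p + 1)) powr (1 / p)"
proof -
  have "(\<integral>x. \<bar>h x - 1/2\<bar> powr p \<partial>A) = (\<integral>y. \<bar>y - 1/2\<bar> powr p \<partial>distr A lborel h)"
    by (rule integral_distr[OF h, symmetric]) simp
  then show ?thesis
    using p by (simp add: normAp_def regression_def integral_return uniform_h integral_uniform_abs_diff_half_powr)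
qed

theorem theorem5:
  fixes d :: nat and A :: "(nat \<Rightarrow> real) measure" and p :: real
  assumes "d \<ge> 2" and "is_copula (d - 1) A" and "1 \<le> p"
  shows "(\<forall>C K. is_copula d C \<and> marginal_copula d C = A \<and> markov_kernel d C K \<longrightarrow>
            normAp A p (\<lambda>x. regression K x - 1 / 2) \<le> 1 / 2 * (p + 1) powr (- 1 / p))
       \<and> (\<exists>C K. is_copula d C \<and> marginal_copula d C = A \<and> markov_kernel d C K \<and>
            normAp A p (\<lambda>x. regression K x - 1 / 2) = 1 / 2 * (p + 1) powr (- 1 / p))"
proof -
  define n where "n = d - 1"
  have d: "d = Suc n" and "0 < n"
    using assms(1) by (simp_all add: n_def)
  have A: "is_copula n A" and sets_A: "sets A = sets (cube_ms n)"
    using assms(2) by (simp_all add: n_def is_copula_def)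
  have bound: "((1/2) powr p / (p + 1)) powr (1 / p) = 1 / 2 * (p + 1) powr (- 1 / p)"
    using assms(3) by (intro half_powr_div_powr_inverse) simp
  define h where "h = (\<lambda>x::nat \<Rightarrow> real. x 0)"
  have h: "h \<in> cube_ms n \<rightarrow>\<^sub>M lborel" "distr A lborel h = uniform_measure lborel {0..1}"
    using A \<open>0 < n\<close> measurable_cube_ms_component[of 0 n] by (auto simp: h_def is_copula_def)
  have h_A: "h \<in> A \<rightarrow>\<^sub>M lborel"
    by (subst measurable_cong_sets[OF sets_A refl]) (rule h(1))
  have "is_copula d (completely_dependent_copula n A h)
      \<and> marginal_copula d (completely_dependent_copula n A h) = A
      \<and> markov_kernel d (completely_dependent_copula n A h) (\<lambda>x. return lborel (h x))
      \<and> normAp A p (\<lambda>x. regression (\<lambda>x. return lborel (h x)) x - 1 / 2) = 1 / 2 * (p + 1) powr (- 1 / p)"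
    using is_copula_completely_dependent_copula[OF A h] marginal_completely_dependent_copula[OF sets_A h(1)]
      markov_kernel_completely_dependent_copula[OF sets_A h(1)]
      normAp_regression_return[OF h_A h(2)] assms(3) bound
    by (simp add: d)
  moreover have "normAp A p (\<lambda>x. regression K x - 1 / 2) \<le> 1 / 2 * (p + 1) powr (- 1 / p)"
    if "is_copula d C" "marginal_copula d C = A" "markov_kernel d C K" for C K
    using normAp_regression_le[of n C K p] that assms(3) bound by (simp add: d)
  ultimately show ?thesis
    by blast
qed

end
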